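(* Let $X$ and $Y$ be $n\times n$ positive semidefinite Hermitian matrices whose Thompson metric $d=d_T(X,Y)$ is finite. Then $$\|X-Y\|_2\;\le\;\frac{e^d-1}{\sqrt{e^{2d}+1}}\sqrt{\|X\|_2^2+\|Y\|_2^2}\;\le\;2^{\frac12}\,\frac{e^d-1}{\sqrt{e^{2d}+1}}\,\max\big[\|X\|_2,\|Y\|_2\big],$$ where $\|\cdot\|_2$ is the Frobenius norm.
   Context: For Hermitian matrices $A,B$, write $A\le B$ (Löwner order) if $B-A$ is positive semidefinite. For positive semidefinite $X,Y$, the Thompson metric is $d_T(X,Y)=\inf\{\log\alpha:\ \alpha\ge1,\ X\le\alpha Y,\ Y\le\alpha X\}$, with $d_T(X,Y)=+\infty$ if no such $\alpha$ exists. Equivalently, $d_T(X,Y)=\log\max\{M(X/Y),M(Y/X)\}$, where $M(X/Y)=\inf\{\lambda>0:X\le\lambda Y\}$. The Frobenius norm is $\|A\|_2=\sqrt{\operatorname{tr}(A^*A)}$, the Schatten $2$-norm. *)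

theory Defs
  imports "HOL-Analysis.Analysis"
begin

definition hermitian :: "complex^'n^'n \<Rightarrow> bool" where
  "hermitian A \<longleftrightarrow> (\<forall>i j. A $ i $ j = cnj (A $ j $ i))"

definition qform :: "complex^'n^'n \<Rightarrow> complex^'n \<Rightarrow> complex" where
  "qform A x = (\<Sum>i\<in>UNIV. \<Sum>j\<in>UNIV. cnj (x $ i) * A $ i $ j * x $ j)"

definition psd :: "complex^'n^'n \<Rightarrow> bool" where
  "psd A \<longleftrightarrow> hermitian A \<and> (\<forall>x. Im (qform A x) = 0 \<and> Re (qform A x) \<ge> 0)"

definition loewner_le :: "complex^'n^'n \<Rightarrow> complex^'n^'n \<Rightarrow> bool" where
  "loewner_le A B \<longleftrightarrow> psd (B - A)"

text \<open>Thompson metric, as an extended real (\<infinity> if no admissible \<alpha>).\<close>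
definition thompson :: "complex^'n^'n \<Rightarrow> complex^'n^'n \<Rightarrow> ereal" where
  "thompson X Y = Inf ((\<lambda>\<alpha>. ereal (ln \<alpha>)) ` {\<alpha>::real. \<alpha> \<ge> 1 \<and>
      loewner_le X (\<alpha> *\<^sub>R Y) \<and> loewner_le Y (\<alpha> *\<^sub>R X)})"

definition frob :: "complex^'n^'n \<Rightarrow> real" where
  "frob A = sqrt (\<Sum>i\<in>UNIV. \<Sum>j\<in>UNIV. (cmod (A $ i $ j))\<^sup>2)"

end

theory Submission
  imports Defs
begin

text \<open>Put \<open>a = e\<^sup>d\<close>. Finiteness of the Thompson distance means that \<open>P = aY - X\<close> and
  \<open>R = aX - Y\<close> are positive semidefinite (the infimum defining it is attained). Summing the
  entrywise identity \<open>(a\<^sup>2+1)\<bar>x-y\<bar>\<^sup>2 = (a-1)\<^sup>2(\<bar>x\<bar>\<^sup>2+\<bar>y\<bar>\<^sup>2) - 2 Re((ay-x) cnj(ax-y))\<close> gives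
  \<open>(a\<^sup>2+1)\<parallel>X-Y\<parallel>\<^sup>2 = (a-1)\<^sup>2(\<parallel>X\<parallel>\<^sup>2+\<parallel>Y\<parallel>\<^sup>2) - 2 Re tr(PR)\<close>, and \<open>tr(PR) \<ge> 0\<close> for positive
  semidefinite \<open>P, R\<close>. The latter is proved by induction on the dimension: eliminating one
  coordinate of a positive definite \<open>P\<close> splits \<open>tr(PR)\<close> into the trace of its Schur complement
  against \<open>R\<close> and a value of the quadratic form of \<open>R\<close>; a semidefinite \<open>P\<close> is first perturbed
  to \<open>P + \<epsilon>I\<close>.\<close>

definition quad_form :: "'a set \<Rightarrow> ('a \<Rightarrow> 'a \<Rightarrow> complex) \<Rightarrow> ('a \<Rightarrow> complex) \<Rightarrow> complex" where
  "quad_form I A x = (\<Sum>i\<in>I. \<Sum>j\<in>I. cnj (x i) * A i j * x j)"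

definition herm_on :: "'a set \<Rightarrow> ('a \<Rightarrow> 'a \<Rightarrow> complex) \<Rightarrow> bool" where
  "herm_on I A \<longleftrightarrow> (\<forall>i\<in>I. \<forall>j\<in>I. A i j = cnj (A j i))"

definition coercive_on :: "real \<Rightarrow> 'a set \<Rightarrow> ('a \<Rightarrow> 'a \<Rightarrow> complex) \<Rightarrow> bool" where
  "coercive_on e I A \<longleftrightarrow> herm_on I A \<and> (\<forall>x. e * (\<Sum>i\<in>I. (cmod (x i))\<^sup>2) \<le> Re (quad_form I A x))"

definition trace_mult :: "'a set \<Rightarrow> ('a \<Rightarrow> 'a \<Rightarrow> complex) \<Rightarrow> ('a \<Rightarrow> 'a \<Rightarrow> complex) \<Rightarrow> complex" where
  "trace_mult I A B = (\<Sum>i\<in>I. \<Sum>j\<in>I. A i j * B j i)"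

definition schur_complement :: "'a \<Rightarrow> ('a \<Rightarrow> 'a \<Rightarrow> complex) \<Rightarrow> 'a \<Rightarrow> 'a \<Rightarrow> complex" where
  "schur_complement k A = (\<lambda>i j. A i j - A i k * A k j / A k k)"

lemma quad_form_cong: "(\<And>i. i \<in> I \<Longrightarrow> x i = y i) \<Longrightarrow> quad_form I A x = quad_form I A y"
  unfolding quad_form_def by (intro sum.cong) auto

lemma quad_form_insert:
  assumes "finite F" "k \<notin> F"
  shows "quad_form (insert k F) A x = cnj (x k) * A k k * x k + cnj (x k) * (\<Sum>j\<in>F. A k j * x j)
     + (\<Sum>i\<in>F. cnj (x i) * A i k) * x k + quad_form F A x"
  using assms by (simp add: quad_form_def sum.distrib sum_distrib_left sum_distrib_right algebra_simps)

lemma quad_form_extend_zero: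
  assumes "finite I" "F \<subseteq> I" "\<And>i. i \<in> I - F \<Longrightarrow> x i = 0"
  shows "quad_form I A x = quad_form F A x"
proof -
  have "quad_form F A x = (\<Sum>i\<in>I. \<Sum>j\<in>F. cnj (x i) * A i j * x j)"
    unfolding quad_form_def using assms by (intro sum.mono_neutral_left) auto
  also have "\<dots> = quad_form I A x"
    unfolding quad_form_def using assms by (intro sum.cong refl sum.mono_neutral_left) auto
  finally show ?thesis ..
qed

lemma coercive_on_subset:
  assumes "finite I" "F \<subseteq> I" "coercive_on e I A"
  shows "coercive_on e F A"
proof -
  have "herm_on F A" using assms unfolding coercive_on_def herm_on_def by blast
  moreover have "e * (\<Sum>i\<in>F. (cmod (x i))\<^sup>2) \<le> Re (quad_form F A x)" for x
  proof -
    define y where "y i = (if i \<in> F then x i else 0)" for i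
    have "quad_form F A x = quad_form I A y"
      using quad_form_extend_zero[OF assms(1,2), of y] quad_form_cong[of F y x] by (simp add: y_def)
    moreover have "(\<Sum>i\<in>I. (cmod (y i))\<^sup>2) = (\<Sum>i\<in>F. (cmod (y i))\<^sup>2)"
      using assms(1,2) by (intro sum.mono_neutral_right) (auto simp: y_def)
    then have "(\<Sum>i\<in>F. (cmod (x i))\<^sup>2) = (\<Sum>i\<in>I. (cmod (y i))\<^sup>2)"
      by (simp add: y_def)
    ultimately show ?thesis using assms(3) unfolding coercive_on_def by metis
  qed
  ultimately show ?thesis unfolding coercive_on_def by blast
qed

lemma coercive_on_diag:
  assumes "finite I" "k \<in> I" "coercive_on e I A"
  shows "A k k = of_real (Re (A k k))" and "e \<le> Re (A k k)"
proof -
  have "coercive_on e {k} A" using coercive_on_subset[OF assms(1) _ assms(3)] assms(2) by blast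
  then have "herm_on {k} A" and q: "\<forall>x. e * (\<Sum>i\<in>{k}. (cmod (x i))\<^sup>2) \<le> Re (quad_form {k} A x)"
    unfolding coercive_on_def by blast+
  then show "A k k = of_real (Re (A k k))"
    by (simp add: herm_on_def complex_eq_iff)
  show "e \<le> Re (A k k)" using spec[OF q, of "\<lambda>_. 1"] by (simp add: quad_form_def)
qed

text \<open>Completing the square in the coordinate \<open>k\<close>.\<close>

lemma quad_form_schur_complement:
  assumes F: "finite F" "k \<notin> F" and herm: "herm_on (insert k F) A"
    and a: "cnj (A k k) = A k k" "A k k \<noteq> 0"
  shows "quad_form F (schur_complement k A) x
    = quad_form (insert k F) A (x(k := - (\<Sum>j\<in>F. A k j * x j) / A k k))"
proof -
  define a where "a = A k k"
  define s where "s = (\<Sum>j\<in>F. A k j * x j)"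
  define y where "y = x(k := - s / a)"
  have yF: "y i = x i" if "i \<in> F" for i using that F(2) unfolding y_def by auto
  have s_cnj: "(\<Sum>i\<in>F. cnj (x i) * A i k) = cnj s"
    unfolding s_def cnj_sum
  proof (rule sum.cong)
    fix i assume "i \<in> F"
    then have "A i k = cnj (A k i)" using herm unfolding herm_on_def by blast
    then show "cnj (x i) * A i k = cnj (A k i * x i)" by simp
  qed simp
  have "quad_form F (schur_complement k A) x
      = quad_form F A x - (\<Sum>i\<in>F. \<Sum>j\<in>F. (cnj (x i) * A i k) * (A k j * x j) / a)"
    unfolding quad_form_def schur_complement_def a_def
    by (simp add: sum_subtractf[symmetric] algebra_simps)
  also have "(\<Sum>i\<in>F. \<Sum>j\<in>F. (cnj (x i) * A i k) * (A k j * x j) / a) = cnj s * s / a"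
    unfolding s_def s_cnj[symmetric, unfolded s_def]
    by (simp add: sum_distrib_left sum_distrib_right sum_divide_distrib) (rule sum.swap)
  also have "quad_form F A x - cnj s * s / a = quad_form (insert k F) A y"
  proof -
    have "quad_form (insert k F) A y = cnj (y k) * a * y k + cnj (y k) * s + cnj s * y k + quad_form F A x"
      using F yF s_cnj quad_form_cong[of F y x]
      by (simp add: quad_form_insert a_def s_def)
    then show ?thesis using a by (simp add: y_def a_def field_simps)
  qed
  finally show ?thesis by (simp add: y_def s_def a_def)
qed

lemma coercive_on_schur_complement:
  assumes F: "finite F" "k \<notin> F" and "0 < e" and A: "coercive_on e (insert k F) A"
  shows "coercive_on e F (schur_complement k A)"
proof -
  have a_real: "cnj (A k k) = A k k" and a_ge: "e \<le> Re (A k k)"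
    using coercive_on_diag[OF _ _ A] F by (metis complex_cnj_complex_of_real finite.insertI insertI1)+
  have "A k k \<noteq> 0" using a_ge \<open>0 < e\<close> by auto
  have herm: "herm_on (insert k F) A" using A unfolding coercive_on_def by blast
  have "herm_on F (schur_complement k A)"
    unfolding herm_on_def
  proof (intro ballI)
    fix i j assume "i \<in> F" "j \<in> F"
    then have "A i j = cnj (A j i)" "A i k = cnj (A k i)" "A k j = cnj (A j k)"
      using herm unfolding herm_on_def by blast+
    then show "schur_complement k A i j = cnj (schur_complement k A j i)"
      using a_real by (simp add: schur_complement_def)
  qed
  moreover have "e * (\<Sum>i\<in>F. (cmod (x i))\<^sup>2) \<le> Re (quad_form F (schur_complement k A) x)" for x
  proof -
    define y where "y = x(k := - (\<Sum>j\<in>F. A k j * x j) / A k k)"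
    have "(\<Sum>i\<in>F. (cmod (y i))\<^sup>2) = (\<Sum>i\<in>F. (cmod (x i))\<^sup>2)"
      using F(2) unfolding y_def by (intro sum.cong) auto
    then have "(\<Sum>i\<in>F. (cmod (x i))\<^sup>2) \<le> (\<Sum>i\<in>insert k F. (cmod (y i))\<^sup>2)"
      using F by simp
    then have "e * (\<Sum>i\<in>F. (cmod (x i))\<^sup>2) \<le> e * (\<Sum>i\<in>insert k F. (cmod (y i))\<^sup>2)"
      using \<open>0 < e\<close> by simp
    also have "\<dots> \<le> Re (quad_form (insert k F) A y)"
      using A unfolding coercive_on_def by blast
    finally show ?thesis
      using quad_form_schur_complement[OF F herm a_real \<open>A k k \<noteq> 0\<close>] by (simp add: y_def)
  qed
  ultimately show ?thesis unfolding coercive_on_def by blast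
qed

lemma trace_mult_insert:
  assumes F: "finite F" "k \<notin> F" and herm: "herm_on (insert k F) A" and "A k k \<noteq> 0"
  shows "trace_mult (insert k F) A B
    = trace_mult F (schur_complement k A) B + quad_form (insert k F) B (\<lambda>j. A j k) / A k k"
proof -
  have "trace_mult (insert k F) A B = trace_mult (insert k F) (schur_complement k A) B
      + (\<Sum>i\<in>insert k F. \<Sum>j\<in>insert k F. A i k * A k j * B j i) / A k k"
    unfolding trace_mult_def schur_complement_def
    by (simp add: sum_divide_distrib sum.distrib[symmetric] algebra_simps diff_divide_distrib)
  also have "trace_mult (insert k F) (schur_complement k A) B = trace_mult F (schur_complement k A) B"
    using F \<open>A k k \<noteq> 0\<close> by (simp add: trace_mult_def schur_complement_def)
  also have "(\<Sum>i\<in>insert k F. \<Sum>j\<in>insert k F. A i k * A k j * B j i)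
      = (\<Sum>j\<in>insert k F. \<Sum>i\<in>insert k F. A i k * A k j * B j i)"
    by (rule sum.swap)
  also have "\<dots> = quad_form (insert k F) B (\<lambda>j. A j k)"
    unfolding quad_form_def
  proof (intro sum.cong refl)
    fix i j assume "i \<in> insert k F" "j \<in> insert k F"
    then have "A j k = cnj (A k j)" using herm unfolding herm_on_def by blast
    then show "A i k * A k j * B j i = cnj (A j k) * B j i * A i k" by simp
  qed
  finally show ?thesis .
qed

lemma Re_trace_mult_nonneg_coercive:
  assumes "finite I" "0 < e" "coercive_on e I A" "coercive_on 0 I B"
  shows "0 \<le> Re (trace_mult I A B)"
  using assms(1,3,4)
proof (induction I arbitrary: A rule: finite_induct)
  case empty
  then show ?case by (simp add: trace_mult_def)
next
  case (insert k F)
  have fin: "finite (insert k F)" using insert.hyps by simp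
  define r where "r = Re (A k k)"
  have a_real: "A k k = of_real r" and a_ge: "e \<le> r"
    using coercive_on_diag[OF fin _ insert.prems(1)] unfolding r_def by auto
  have "coercive_on e F (schur_complement k A)"
    using insert.hyps \<open>0 < e\<close> insert.prems(1) by (rule coercive_on_schur_complement)
  moreover have "coercive_on 0 F B"
    using coercive_on_subset[OF fin _ insert.prems(2)] by blast
  ultimately have "0 \<le> Re (trace_mult F (schur_complement k A) B)"
    by (rule insert.IH)
  moreover have "0 \<le> Re (quad_form (insert k F) B (\<lambda>j. A j k))"
    using insert.prems(2) unfolding coercive_on_def by (metis mult_zero_left)
  moreover have "trace_mult (insert k F) A B
      = trace_mult F (schur_complement k A) B + quad_form (insert k F) B (\<lambda>j. A j k) / of_real r"
    using trace_mult_insert[OF insert.hyps, of A B] insert.prems(1) a_real a_ge \<open>0 < e\<close>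
    unfolding coercive_on_def by simp
  ultimately show ?case using a_ge \<open>0 < e\<close> by simp
qed

lemma sum_if_eq_left:
  fixes c :: "'b::comm_semiring_1"
  assumes "finite I" "i \<in> I"
  shows "(\<Sum>j\<in>I. (if i = j then c else 0) * f j) = c * f i"
proof -
  have "(\<Sum>j\<in>I. (if i = j then c else 0) * f j) = (\<Sum>j\<in>I. if i = j then c * f j else 0)"
    by (rule sum.cong) auto
  then show ?thesis using assms by simp
qed

lemma coercive_on_add_diagonal:
  assumes I: "finite I" and A: "coercive_on 0 I A"
  shows "coercive_on e I (\<lambda>i j. A i j + (if i = j then of_real e else 0))"
proof -
  have "herm_on I (\<lambda>i j. A i j + (if i = j then of_real e else 0))"
    unfolding herm_on_def
  proof (intro ballI)
    fix i j assume "i \<in> I" "j \<in> I"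
    then have "A i j = cnj (A j i)" using A unfolding coercive_on_def herm_on_def by blast
    then show "A i j + (if i = j then of_real e else 0) = cnj (A j i + (if j = i then of_real e else 0))"
      by simp
  qed
  moreover have "e * (\<Sum>i\<in>I. (cmod (x i))\<^sup>2) \<le> Re (quad_form I (\<lambda>i j. A i j + (if i = j then of_real e else 0)) x)"
    for x
  proof -
    have diag: "(\<Sum>i\<in>I. \<Sum>j\<in>I. cnj (x i) * (if i = j then of_real e else 0) * x j)
        = (\<Sum>i\<in>I. of_real e * (x i * cnj (x i)))"
    proof (rule sum.cong[OF refl])
      fix i assume "i \<in> I"
      have "(\<Sum>j\<in>I. cnj (x i) * (if i = j then of_real e else 0) * x j)
          = (\<Sum>j\<in>I. if j = i then of_real e * (x i * cnj (x i)) else 0)"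
        by (rule sum.cong) auto
      then show "(\<Sum>j\<in>I. cnj (x i) * (if i = j then of_real e else 0) * x j) = of_real e * (x i * cnj (x i))"
        using I \<open>i \<in> I\<close> by simp
    qed
    have "quad_form I (\<lambda>i j. A i j + (if i = j then of_real e else 0)) x
        = quad_form I A x + (\<Sum>i\<in>I. \<Sum>j\<in>I. cnj (x i) * (if i = j then of_real e else 0) * x j)"
      unfolding quad_form_def by (simp add: distrib_left distrib_right sum.distrib)
    also have "\<dots> = quad_form I A x + of_real (e * (\<Sum>i\<in>I. (cmod (x i))\<^sup>2))"
      unfolding diag by (simp add: sum_distrib_left complex_norm_square[symmetric])
    finally show ?thesis using A unfolding coercive_on_def by simp
  qed
  ultimately show ?thesis unfolding coercive_on_def by blast
qed

lemma trace_mult_add_diagonal: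
  assumes "finite I"
  shows "trace_mult I (\<lambda>i j. A i j + (if i = j then c else 0)) B = trace_mult I A B + c * (\<Sum>i\<in>I. B i i)"
  unfolding trace_mult_def using assms
  by (simp add: distrib_right sum.distrib sum_distrib_left sum_if_eq_left)

lemma Re_trace_mult_nonneg:
  assumes I: "finite I" and A: "coercive_on 0 I A" and B: "coercive_on 0 I B"
  shows "0 \<le> Re (trace_mult I A B)"
proof (rule field_le_epsilon)
  fix \<epsilon> :: real assume "0 < \<epsilon>"
  define t where "t = (\<Sum>i\<in>I. Re (B i i))"
  have "0 \<le> t" unfolding t_def using coercive_on_diag(2)[OF I _ B] by (simp add: sum_nonneg)
  define e where "e = \<epsilon> / (t + 1)"
  have "0 < e" using \<open>0 < \<epsilon>\<close> \<open>0 \<le> t\<close> by (simp add: e_def)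
  have "e * t \<le> \<epsilon>"
    using \<open>0 < \<epsilon>\<close> \<open>0 \<le> t\<close> by (simp add: e_def field_simps)
  have "0 \<le> Re (trace_mult I (\<lambda>i j. A i j + (if i = j then of_real e else 0)) B)"
    using I \<open>0 < e\<close> coercive_on_add_diagonal[OF I A] B by (rule Re_trace_mult_nonneg_coercive)
  also have "\<dots> = Re (trace_mult I A B) + e * t"
    using I by (simp add: trace_mult_add_diagonal t_def Re_sum)
  finally show "0 \<le> Re (trace_mult I A B) + \<epsilon>" using \<open>e * t \<le> \<epsilon>\<close> by linarith
qed

lemma coercive_on_psd:
  assumes "psd X"
  shows "coercive_on 0 UNIV (\<lambda>i j. X $ i $ j)"
proof -
  have "herm_on UNIV (\<lambda>i j. X $ i $ j)"
    using assms unfolding psd_def hermitian_def herm_on_def by blast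
  moreover have "quad_form UNIV (\<lambda>i j. X $ i $ j) x = qform X (\<chi> i. x i)" for x
    by (simp add: quad_form_def qform_def)
  ultimately show ?thesis using assms unfolding psd_def coercive_on_def by simp
qed

lemma Re_trace_mult_psd_nonneg:
  fixes P R :: "complex^'n^'n"
  assumes "psd P" "psd R"
  shows "0 \<le> Re (\<Sum>i\<in>UNIV. \<Sum>j\<in>UNIV. P $ i $ j * R $ j $ i)"
  using Re_trace_mult_nonneg[OF finite coercive_on_psd[OF assms(1)] coercive_on_psd[OF assms(2)]]
  by (simp add: trace_mult_def)

lemma qform_diff: "qform (A - B) x = qform A x - qform B x"
  by (simp add: qform_def sum_subtractf[symmetric] algebra_simps)

lemma scaleR_matrix_nth: "(r *\<^sub>R A) $ i $ j = of_real r * A $ i $ j"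
  unfolding vector_scaleR_component by (rule scaleR_conv_of_real)

lemma qform_scaleR: "qform (r *\<^sub>R A) x = of_real r * qform A x"
  unfolding qform_def scaleR_matrix_nth by (simp add: sum_distrib_left algebra_simps)

lemma hermitian_scaleR_diff:
  assumes "hermitian A" "hermitian B"
  shows "hermitian (r *\<^sub>R A - B)"
  unfolding hermitian_def
proof (intro allI)
  fix i j
  have "A $ i $ j = cnj (A $ j $ i)" "B $ i $ j = cnj (B $ j $ i)"
    using assms unfolding hermitian_def by blast+
  then show "(r *\<^sub>R A - B) $ i $ j = cnj ((r *\<^sub>R A - B) $ j $ i)"
    by (simp add: scaleR_matrix_nth)
qed

lemma psd_scaleR_diff_iff:
  assumes "psd X" "psd Y"
  shows "psd (r *\<^sub>R Y - X) \<longleftrightarrow> (\<forall>x. Re (qform X x) \<le> r * Re (qform Y x))"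
proof -
  have "hermitian (r *\<^sub>R Y - X)" using assms by (simp add: psd_def hermitian_scaleR_diff)
  moreover have "Im (qform X x) = 0" "Im (qform Y x) = 0" for x
    using assms by (auto simp: psd_def)
  ultimately show ?thesis unfolding psd_def by (auto simp: qform_diff qform_scaleR)
qed

lemma psd_scaleR_diff_mono:
  assumes "psd X" "psd Y" "r \<le> s" "psd (r *\<^sub>R Y - X)"
  shows "psd (s *\<^sub>R Y - X)"
proof -
  have "Re (qform X x) \<le> s * Re (qform Y x)" for x
  proof -
    have "Re (qform X x) \<le> r * Re (qform Y x)" using assms psd_scaleR_diff_iff by blast
    also have "\<dots> \<le> s * Re (qform Y x)"
      using assms(2,3) by (intro mult_right_mono) (auto simp: psd_def)
    finally show ?thesis .
  qed
  then show ?thesis using assms(1,2) psd_scaleR_diff_iff by blast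
qed

lemma le_mult_of_forall_gt:
  fixes a b c :: real
  assumes "0 \<le> a" "\<And>g. c < g \<Longrightarrow> b \<le> g * a"
  shows "b \<le> c * a"
proof (rule field_le_epsilon)
  fix \<epsilon> :: real assume "0 < \<epsilon>"
  have "b \<le> (c + \<epsilon> / (a + 1)) * a"
    by (rule assms(2)) (use assms(1) \<open>0 < \<epsilon>\<close> in simp)
  also have "\<dots> \<le> c * a + \<epsilon>" using assms(1) \<open>0 < \<epsilon>\<close> by (simp add: field_simps)
  finally show "b \<le> c * a + \<epsilon>" .
qed

lemma psd_scaleR_diff_of_gt:
  assumes "psd X" "psd Y" "\<And>g. c < g \<Longrightarrow> psd (g *\<^sub>R Y - X)"
  shows "psd (c *\<^sub>R Y - X)"
proof -
  have "Re (qform X x) \<le> c * Re (qform Y x)" for x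
  proof (rule le_mult_of_forall_gt)
    show "0 \<le> Re (qform Y x)" using assms(2) by (simp add: psd_def)
    fix g assume "c < g"
    then show "Re (qform X x) \<le> g * Re (qform Y x)"
      using assms(3) psd_scaleR_diff_iff[OF assms(1,2)] by blast
  qed
  then show ?thesis using assms(1,2) psd_scaleR_diff_iff by blast
qed

lemma thompson_attained:
  assumes X: "psd X" and Y: "psd Y" and d: "thompson X Y = ereal d"
  shows "0 \<le> d" "psd (exp d *\<^sub>R Y - X)" "psd (exp d *\<^sub>R X - Y)"
proof -
  define S where "S = {\<alpha>::real. 1 \<le> \<alpha> \<and> loewner_le X (\<alpha> *\<^sub>R Y) \<and> loewner_le Y (\<alpha> *\<^sub>R X)}"
  have Inf_S: "Inf ((\<lambda>\<alpha>. ereal (ln \<alpha>)) ` S) = ereal d"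
    using d by (simp add: thompson_def S_def)
  have "ereal 0 \<le> Inf ((\<lambda>\<alpha>. ereal (ln \<alpha>)) ` S)"
    by (rule Inf_greatest) (auto simp: S_def)
  then show "0 \<le> d" using Inf_S by simp
  have below: "\<exists>\<beta>\<in>S. \<beta> < g" if "exp d < g" for g
  proof -
    have "0 < g" using that exp_gt_zero[of d] by linarith
    then have "Inf ((\<lambda>\<alpha>. ereal (ln \<alpha>)) ` S) < ereal (ln g)"
      using that Inf_S by (simp add: ln_less_cancel_iff[symmetric] del: ln_less_cancel_iff)
    then obtain \<beta> where "\<beta> \<in> S" "ln \<beta> < ln g" by (auto simp: Inf_less_iff)
    then have "\<beta> < g" using \<open>0 < g\<close> by (simp add: S_def)
    with \<open>\<beta> \<in> S\<close> show ?thesis by blast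
  qed
  show "psd (exp d *\<^sub>R Y - X)"
  proof (rule psd_scaleR_diff_of_gt[OF X Y])
    fix g assume "exp d < g"
    then obtain \<beta> where "\<beta> \<in> S" "\<beta> < g" using below by blast
    then show "psd (g *\<^sub>R Y - X)"
      using psd_scaleR_diff_mono[OF X Y, of \<beta> g] unfolding S_def loewner_le_def by simp
  qed
  show "psd (exp d *\<^sub>R X - Y)"
  proof (rule psd_scaleR_diff_of_gt[OF Y X])
    fix g assume "exp d < g"
    then obtain \<beta> where "\<beta> \<in> S" "\<beta> < g" using below by blast
    then show "psd (g *\<^sub>R X - Y)"
      using psd_scaleR_diff_mono[OF Y X, of \<beta> g] unfolding S_def loewner_le_def by simp
  qed
qed

lemma cmod_diff_power2_eq:
  fixes x y :: complex and a :: real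
  shows "(a\<^sup>2 + 1) * (cmod (x - y))\<^sup>2
    = (a - 1)\<^sup>2 * ((cmod x)\<^sup>2 + (cmod y)\<^sup>2) - 2 * Re ((of_real a * y - x) * cnj (of_real a * x - y))"
proof -
  have norms: "(cmod (x - y))\<^sup>2 = (Re x - Re y)\<^sup>2 + (Im x - Im y)\<^sup>2"
    "(cmod x)\<^sup>2 = (Re x)\<^sup>2 + (Im x)\<^sup>2" "(cmod y)\<^sup>2 = (Re y)\<^sup>2 + (Im y)\<^sup>2"
    by (simp_all add: cmod_power2)
  have Re_prod: "Re ((of_real a * y - x) * cnj (of_real a * x - y))
    = (a * Re y - Re x) * (a * Re x - Re y) + (a * Im y - Im x) * (a * Im x - Im y)"
    by (simp add: algebra_simps)
  show ?thesis unfolding norms Re_prod by algebra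
qed

lemma frob_power2: "(frob A)\<^sup>2 = (\<Sum>i\<in>UNIV. \<Sum>j\<in>UNIV. (cmod (A $ i $ j))\<^sup>2)"
  unfolding frob_def by (simp add: sum_nonneg)

lemma frob_diff_power2_le:
  fixes X Y :: "complex^'n^'n"
  assumes P: "psd (a *\<^sub>R Y - X)" and R: "psd (a *\<^sub>R X - Y)"
  shows "(a\<^sup>2 + 1) * (frob (X - Y))\<^sup>2 \<le> (a - 1)\<^sup>2 * ((frob X)\<^sup>2 + (frob Y)\<^sup>2)"
proof -
  define P where "P = a *\<^sub>R Y - X"
  define R where "R = a *\<^sub>R X - Y"
  have R_herm: "R $ j $ i = cnj (R $ i $ j)" for i j
    using R unfolding R_def psd_def hermitian_def by blast
  have "(a\<^sup>2 + 1) * (frob (X - Y))\<^sup>2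
      = (\<Sum>i\<in>UNIV. \<Sum>j\<in>UNIV. (a\<^sup>2 + 1) * (cmod (X $ i $ j - Y $ i $ j))\<^sup>2)"
    by (simp add: frob_power2 sum_distrib_left)
  also have "\<dots> = (\<Sum>i\<in>UNIV. \<Sum>j\<in>UNIV. (a - 1)\<^sup>2 * ((cmod (X $ i $ j))\<^sup>2 + (cmod (Y $ i $ j))\<^sup>2)
      - 2 * Re (P $ i $ j * R $ j $ i))"
  proof (intro sum.cong refl)
    fix i j
    have "P $ i $ j = of_real a * Y $ i $ j - X $ i $ j" "R $ i $ j = of_real a * X $ i $ j - Y $ i $ j"
      unfolding P_def R_def vector_minus_component scaleR_matrix_nth by simp_all
    moreover have "R $ j $ i = cnj (R $ i $ j)" by (rule R_herm)
    ultimately show "(a\<^sup>2 + 1) * (cmod (X $ i $ j - Y $ i $ j))\<^sup>2 = (a - 1)\<^sup>2 * ((cmod (X $ i $ j))\<^sup>2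
        + (cmod (Y $ i $ j))\<^sup>2) - 2 * Re (P $ i $ j * R $ j $ i)"
      by (simp add: cmod_diff_power2_eq)
  qed
  also have "\<dots> = (a - 1)\<^sup>2 * ((frob X)\<^sup>2 + (frob Y)\<^sup>2)
      - 2 * Re (\<Sum>i\<in>UNIV. \<Sum>j\<in>UNIV. P $ i $ j * R $ j $ i)"
    by (simp add: frob_power2 Re_sum sum_subtractf sum.distrib sum_distrib_left distrib_left)
  also have "\<dots> \<le> (a - 1)\<^sup>2 * ((frob X)\<^sup>2 + (frob Y)\<^sup>2)"
    using Re_trace_mult_psd_nonneg[OF P R] by (simp add: P_def R_def)
  finally show ?thesis .
qed

lemma frob_diff_le:
  fixes X Y :: "complex^'n^'n"
  assumes "1 \<le> a" "psd (a *\<^sub>R Y - X)" "psd (a *\<^sub>R X - Y)"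
  shows "frob (X - Y) \<le> (a - 1) / sqrt (a\<^sup>2 + 1) * sqrt ((frob X)\<^sup>2 + (frob Y)\<^sup>2)"
proof -
  have "0 < a\<^sup>2 + 1" by (simp add: add_nonneg_pos)
  then have "(frob (X - Y))\<^sup>2 \<le> (a - 1)\<^sup>2 / (a\<^sup>2 + 1) * ((frob X)\<^sup>2 + (frob Y)\<^sup>2)"
    using frob_diff_power2_le[OF assms(2,3)] by (simp add: field_simps)
  then have "sqrt ((frob (X - Y))\<^sup>2) \<le> sqrt ((a - 1)\<^sup>2 / (a\<^sup>2 + 1) * ((frob X)\<^sup>2 + (frob Y)\<^sup>2))"
    by (rule real_sqrt_le_mono)
  then show ?thesis
    using assms(1) by (simp add: frob_def real_sqrt_mult real_sqrt_divide)
qed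

lemma sqrt_sum_power2_le_max:
  fixes x y :: real
  assumes "0 \<le> x" "0 \<le> y"
  shows "sqrt (x\<^sup>2 + y\<^sup>2) \<le> sqrt 2 * max x y"
proof -
  have "x\<^sup>2 \<le> (max x y)\<^sup>2" "y\<^sup>2 \<le> (max x y)\<^sup>2"
    using assms by (simp_all add: power_mono)
  then have "x\<^sup>2 + y\<^sup>2 \<le> 2 * (max x y)\<^sup>2" by simp
  then have "sqrt (x\<^sup>2 + y\<^sup>2) \<le> sqrt (2 * (max x y)\<^sup>2)" by (rule real_sqrt_le_mono)
  also have "\<dots> = sqrt 2 * max x y" using assms by (simp add: real_sqrt_mult)
  finally show ?thesis .
qed

theorem mainTheorem2:
  fixes X Y :: "complex^'n^'n" and d :: real
  assumes "psd X" and "psd Y"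
    and "thompson X Y = ereal d"
  shows "frob (X - Y) \<le> (exp d - 1) / sqrt (exp (2*d) + 1) * sqrt ((frob X)\<^sup>2 + (frob Y)\<^sup>2)
       \<and> (exp d - 1) / sqrt (exp (2*d) + 1) * sqrt ((frob X)\<^sup>2 + (frob Y)\<^sup>2)
           \<le> sqrt 2 * ((exp d - 1) / sqrt (exp (2*d) + 1)) * max (frob X) (frob Y)"
proof
  have exp_2d: "exp (2 * d) = (exp d)\<^sup>2" by (simp add: exp_double)
  have "0 \<le> d" "psd (exp d *\<^sub>R Y - X)" "psd (exp d *\<^sub>R X - Y)"
    using thompson_attained[OF assms] by auto
  then show "frob (X - Y) \<le> (exp d - 1) / sqrt (exp (2*d) + 1) * sqrt ((frob X)\<^sup>2 + (frob Y)\<^sup>2)"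
    unfolding exp_2d by (intro frob_diff_le) auto
  have "0 \<le> (exp d - 1) / sqrt (exp (2*d) + 1)" using \<open>0 \<le> d\<close> by simp
  moreover have "sqrt ((frob X)\<^sup>2 + (frob Y)\<^sup>2) \<le> sqrt 2 * max (frob X) (frob Y)"
    by (rule sqrt_sum_power2_le_max) (simp_all add: frob_def sum_nonneg)
  ultimately show "(exp d - 1) / sqrt (exp (2*d) + 1) * sqrt ((frob X)\<^sup>2 + (frob Y)\<^sup>2)
      \<le> sqrt 2 * ((exp d - 1) / sqrt (exp (2*d) + 1)) * max (frob X) (frob Y)"
    by (metis mult.left_commute mult_left_mono mult.assoc)
qed

end
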